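(* The graph $G$ defined below is countable, connected and arc transitive, and it has infinite motion.
   Context: Let $\mathbb Q^+=\{q^+: q\in\mathbb Q\}$ and $\mathbb Q^-=\{q^-: q\in\mathbb Q\}$ be two disjoint copies of $\mathbb Q$. $G$ is the simple undirected graph with vertex set $V=\mathbb Q^+\cup\mathbb Q^-$ in which the edges are exactly the pairs $\{q^+,r^-\}$ with $q,r\in\mathbb Q$ and $q<r$ (there are no edges inside $\mathbb Q^+$ or inside $\mathbb Q^-$). A graph is arc transitive if its automorphism group acts transitively on ordered pairs $(u,v)$ of adjacent vertices. A graph has infinite motion if every non-identity automorphism moves infinitely many vertices. *)

theory Defs
  imports Main "HOL-Library.Countable_Set"
begin

text \<open>Simple undirected graphs on a type 'a, given by a symmetric irreflexive
  adjacency relation E; the vertex set is the whole type.\<close>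

definition graph_automorphism :: "('a \<Rightarrow> 'a \<Rightarrow> bool) \<Rightarrow> ('a \<Rightarrow> 'a) \<Rightarrow> bool" where
  "graph_automorphism E f \<longleftrightarrow> bij f \<and> (\<forall>u v. E u v \<longleftrightarrow> E (f u) (f v))"

definition graph_connected :: "('a \<Rightarrow> 'a \<Rightarrow> bool) \<Rightarrow> bool" where
  "graph_connected E \<longleftrightarrow> (\<forall>u v. (u, v) \<in> {(x, y). E x y}\<^sup>*)"

definition arc_transitive :: "('a \<Rightarrow> 'a \<Rightarrow> bool) \<Rightarrow> bool" where
  "arc_transitive E \<longleftrightarrow>
     (\<forall>u v x y. E u v \<longrightarrow> E x y \<longrightarrow>
        (\<exists>f. graph_automorphism E f \<and> f u = x \<and> f v = y))"

definition infinite_motion :: "('a \<Rightarrow> 'a \<Rightarrow> bool) \<Rightarrow> bool" where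
  "infinite_motion E \<longleftrightarrow>
     (\<forall>f. graph_automorphism E f \<and> f \<noteq> id \<longrightarrow> infinite {v. f v \<noteq> v})"

text \<open>The graph G: Inl q stands for q^+, Inr r for r^-; edges {q^+, r^-} with q < r.\<close>
definition G_adj :: "rat + rat \<Rightarrow> rat + rat \<Rightarrow> bool" where
  "G_adj u v \<longleftrightarrow>
     (\<exists>q r. q < r \<and> ((u = Inl q \<and> v = Inr r) \<or> (u = Inr r \<and> v = Inl q)))"

end

theory Submission
  imports Defs
begin

text \<open>Order automorphisms of \<open>\<rat>\<close>, acting diagonally on both copies, together with the
  reflection \<open>q\<^sup>+ \<leftrightarrow> (-q)\<^sup>-\<close> are automorphisms of \<open>G\<close>; since increasing affine maps of \<open>\<rat>\<close>
  send any pair \<open>q < r\<close> to any other, this makes \<open>G\<close> arc transitive. Two distinct vertices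
  have neighbourhoods differing on an infinite interval of \<open>\<rat>\<close>, and an automorphism moving
  \<open>v\<close> must move every vertex distinguishing \<open>v\<close> from its image, so it has infinite motion.\<close>

lemma graph_automorphism_comp:
  assumes "graph_automorphism E f" "graph_automorphism E g"
  shows "graph_automorphism E (f \<circ> g)"
  using assms by (simp add: graph_automorphism_def bij_comp)

lemma graph_connected_if_hub:
  assumes sym: "\<And>u v. E u v \<Longrightarrow> E v u"
    and hub: "\<And>u. (u, c) \<in> {(x, y). E x y}\<^sup>*"
  shows "graph_connected E"
  unfolding graph_connected_def
proof (intro allI)
  fix u v
  have "sym {(x, y). E x y}" using sym by (auto intro: symI)
  then have "(c, v) \<in> {(x, y). E x y}\<^sup>*" using hub[of v] by (meson sym_rtrancl symD)
  with hub[of u] show "(u, v) \<in> {(x, y). E x y}\<^sup>*" by (rule rtrancl_trans)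
qed

lemma infinite_motion_if_neighbourhoods_differ_infinitely:
  assumes "\<And>v w. v \<noteq> w \<Longrightarrow> infinite {x. E v x \<noteq> E w x}"
  shows "infinite_motion E"
  unfolding infinite_motion_def
proof (intro allI impI)
  fix f assume f: "graph_automorphism E f \<and> f \<noteq> id"
  then obtain v where "f v \<noteq> v" by (metis eq_id_iff)
  have "E v x = E (f v) x" if "f x = x" for x
    using f that unfolding graph_automorphism_def by metis
  then have "{x. E v x \<noteq> E (f v) x} \<subseteq> {x. f x \<noteq> x}" by blast
  moreover have "infinite {x. E v x \<noteq> E (f v) x}"
    using \<open>f v \<noteq> v\<close> assms by metis
  ultimately show "infinite {x. f x \<noteq> x}" using finite_subset by blast
qed

lemma G_adj_simps [simp]:
  "G_adj (Inl q) (Inr r) \<longleftrightarrow> q < r"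
  "G_adj (Inr r) (Inl q) \<longleftrightarrow> q < r"
  "\<not> G_adj (Inl q) (Inl q')"
  "\<not> G_adj (Inr r) (Inr r')"
  by (auto simp: G_adj_def)

lemma G_connected: "graph_connected G_adj"
proof (rule graph_connected_if_hub[where c = "Inl 0"])
  show "G_adj u v \<Longrightarrow> G_adj v u" for u v
    by (auto simp: G_adj_def)
  let ?R = "{(x, y). G_adj x y}"
  have left: "(Inl q, Inl 0) \<in> ?R\<^sup>*" for q :: rat
  proof -
    have "(Inl q, Inr (max q 0 + 1)) \<in> ?R" "(Inr (max q 0 + 1), Inl 0) \<in> ?R" by auto
    then show ?thesis by (blast intro: converse_rtrancl_into_rtrancl)
  qed
  show "(u, Inl 0) \<in> ?R\<^sup>*" for u
  proof (cases u)
    case (Inr r)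
    have "(Inr r, Inl (r - 1)) \<in> ?R" by simp
    with left[of "r - 1"] show ?thesis
      unfolding Inr by (blast intro: converse_rtrancl_into_rtrancl)
  qed (simp add: left)
qed

lemma G_neighbourhoods_differ_infinitely:
  assumes "v \<noteq> w"
  shows "infinite {x. G_adj v x \<noteq> G_adj w x}"
proof -
  have swap: "{x. G_adj v x \<noteq> G_adj w x} = {x. G_adj w x \<noteq> G_adj v x}" for v w
    by auto
  have plus: "infinite {x. G_adj (Inl q) x \<noteq> G_adj (Inl q') x}" if "q < q'" for q q'
  proof -
    have "Inr ` {q<..q'} \<subseteq> {x. G_adj (Inl q) x \<noteq> G_adj (Inl q') x}" by auto
    moreover have "infinite (Inr ` {q<..q'} :: (rat + rat) set)"
      using that by (simp add: finite_image_iff)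
    ultimately show ?thesis using finite_subset by blast
  qed
  have minus: "infinite {x. G_adj (Inr r) x \<noteq> G_adj (Inr r') x}" if "r < r'" for r r'
  proof -
    have "Inl ` {r..<r'} \<subseteq> {x. G_adj (Inr r) x \<noteq> G_adj (Inr r') x}" by auto
    moreover have "infinite (Inl ` {r..<r'} :: (rat + rat) set)"
      using that by (simp add: finite_image_iff)
    ultimately show ?thesis using finite_subset by blast
  qed
  have mixed: "infinite {x. G_adj (Inl q) x \<noteq> G_adj (Inr r) x}" for q r
  proof -
    have "Inr ` {q<..} \<subseteq> {x. G_adj (Inl q) x \<noteq> G_adj (Inr r) x}" by auto
    moreover have "infinite (Inr ` {q<..} :: (rat + rat) set)"
      using infinite_Ioi by (simp add: finite_image_iff)
    ultimately show ?thesis using finite_subset by blast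
  qed
  show ?thesis
  proof (cases v; cases w)
    fix q q' assume "v = Inl q" "w = Inl q'"
    with assms have "q < q' \<or> q' < q" by auto
    with \<open>v = Inl q\<close> \<open>w = Inl q'\<close> show ?thesis
      using plus[of q q'] plus[of q' q] swap[of "Inl q" "Inl q'"] by auto
  next
    fix r r' assume "v = Inr r" "w = Inr r'"
    with assms have "r < r' \<or> r' < r" by auto
    with \<open>v = Inr r\<close> \<open>w = Inr r'\<close> show ?thesis
      using minus[of r r'] minus[of r' r] swap[of "Inr r" "Inr r'"] by auto
  next
    fix q r assume "v = Inl q" "w = Inr r"
    with mixed show ?thesis by simp
  next
    fix r q assume "v = Inr r" "w = Inl q"
    with mixed[of q r] show ?thesis by (subst swap) simp
  qed
qed

lemma G_automorphism_map_sum: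
  assumes "strict_mono h" "surj h"
  shows "graph_automorphism G_adj (map_sum h h)"
proof -
  have "inj (map_sum h h)"
    using assms(1) by (simp add: strict_mono_imp_inj_on sum.inj_map)
  moreover have "surj (map_sum h h)"
  proof (rule surjI)
    show "map_sum h h (map_sum (inv h) (inv h) x) = x" for x
      using assms(2) by (cases x) (simp_all add: surj_f_inv_f)
  qed
  moreover have "G_adj u v \<longleftrightarrow> G_adj (map_sum h h u) (map_sum h h v)" for u v
    using assms(1) by (cases u; cases v) (simp_all add: strict_mono_less)
  ultimately show ?thesis
    unfolding graph_automorphism_def bij_def by blast
qed

definition G_reflection :: "rat + rat \<Rightarrow> rat + rat" where
  "G_reflection = case_sum (\<lambda>q. Inr (- q)) (\<lambda>r. Inl (- r))"

lemma G_automorphism_reflection: "graph_automorphism G_adj G_reflection"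
proof -
  have "G_reflection \<circ> G_reflection = id"
    by (simp add: fun_eq_iff G_reflection_def split: sum.split)
  then have "bij G_reflection" using o_bij by blast
  moreover have "G_adj u v \<longleftrightarrow> G_adj (G_reflection u) (G_reflection v)" for u v
    by (cases u; cases v) (simp_all add: G_reflection_def)
  ultimately show ?thesis
    unfolding graph_automorphism_def by blast
qed

lemma order_automorphism_through_pairs:
  fixes q r q' r' :: "'a :: linordered_field"
  assumes "q < r" "q' < r'"
  obtains h where "strict_mono h" "surj h" "h q = q'" "h r = r'"
proof
  define a where "a = (r' - q') / (r - q)"
  have "a > 0" using assms by (simp add: a_def)
  let ?h = "\<lambda>t. q' + a * (t - q)"
  show "strict_mono ?h" using \<open>a > 0\<close> by (intro strict_monoI) simp
  show "surj ?h"
  proof (rule surjI)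
    show "?h (q + (y - q') / a) = y" for y using \<open>a > 0\<close> by simp
  qed
  show "?h q = q'" by simp
  show "?h r = r'" using assms by (simp add: a_def)
qed

lemma G_arc_to_arc:
  assumes "q < r" "q' < r'"
  shows "\<exists>f. graph_automorphism G_adj f \<and> f (Inl q) = Inl q' \<and> f (Inr r) = Inr r'"
    and "\<exists>f. graph_automorphism G_adj f \<and> f (Inl q) = Inr r' \<and> f (Inr r) = Inl q'"
proof -
  obtain h where "strict_mono h" "surj h" "h q = q'" "h r = r'"
    using order_automorphism_through_pairs assms .
  then show "\<exists>f. graph_automorphism G_adj f \<and> f (Inl q) = Inl q' \<and> f (Inr r) = Inr r'"
    by (intro exI[of _ "map_sum h h"]) (simp add: G_automorphism_map_sum)
next
  obtain h where h: "strict_mono h" "surj h" "h q = - r'" "h r = - q'"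
    using order_automorphism_through_pairs assms by (metis neg_less_iff_less)
  let ?f = "G_reflection \<circ> map_sum h h"
  have "graph_automorphism G_adj ?f"
    using h by (simp add: graph_automorphism_comp G_automorphism_reflection G_automorphism_map_sum)
  moreover have "?f (Inl q) = Inr r'" "?f (Inr r) = Inl q'"
    using h by (simp_all add: G_reflection_def)
  ultimately show "\<exists>f. graph_automorphism G_adj f \<and> f (Inl q) = Inr r' \<and> f (Inr r) = Inl q'"
    by blast
qed

lemma G_arc_transitive: "arc_transitive G_adj"
  unfolding arc_transitive_def
proof (intro allI impI)
  fix u v x y assume "G_adj u v" "G_adj x y"
  then obtain q r q' r' where "q < r" "q' < r'"
    and "u = Inl q \<and> v = Inr r \<or> u = Inr r \<and> v = Inl q"
    and "x = Inl q' \<and> y = Inr r' \<or> x = Inr r' \<and> y = Inl q'"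
    unfolding G_adj_def by blast
  with G_arc_to_arc[of q r q' r']
  show "\<exists>f. graph_automorphism G_adj f \<and> f u = x \<and> f v = y" by auto
qed

theorem mainTheorem3:
  shows "countable (UNIV :: (rat + rat) set) \<and> graph_connected G_adj \<and>
         arc_transitive G_adj \<and> infinite_motion G_adj"
  using G_connected G_arc_transitive
    infinite_motion_if_neighbourhoods_differ_infinitely[OF G_neighbourhoods_differ_infinitely]
  by simp

end
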